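(* For all $n\ge1$, $$h_n=\frac52nH_n+\frac32P_n-2H_n,\qquad p_n=\frac52nP_n-\frac32P_n=\frac{5n-3}{2}P_n.$$
   Context: Let $s=\sqrt3/2$. Consider the standard triangular lattice in the plane whose vertices are the points $(a+b/2,\,bs)$ with $a,b\in\mathbb Z$ and whose edges are the unit segments joining lattice points in the directions $0^\circ,60^\circ,120^\circ$; it divides the plane into unit equilateral triangles called cells. A small tile is a single cell; a large tile is an equilateral triangle of side $2$ whose vertices are lattice points (so it is a union of $4$ cells; it may point up or down). For a region $R$ that is a finite union of cells, a tiling of $R$ is a finite set of small and large tiles, each contained in $R$, with pairwise disjoint interiors and union equal to $R$. For $n\ge1$, the region $H_n$ is the union of the trapezoid with vertices $(0,0),(n,0),(n-\tfrac12,s),(\tfrac12,s)$ and the trapezoid with vertices $(\tfrac12,s),(n-\tfrac12,s),(n,2s),(0,2s)$ ($4n-2$ cells; for $n=1$ two unit triangles meeting at a point), and $P_n$ is $H_n$ with the cell with vertices $(n-1,0),(n,0),(n-\tfrac12,s)$ removed. $H_n$ and $P_n$ also denote the numbers of tilings of these regions; thus $H_n=\frac{(1+\sqrt2)^n+(1-\sqrt2)^n}{2}$ and $P_n=\frac{(1+\sqrt2)^n-(1-\sqrt2)^n}{2\sqrt2}$. Define $h_n$ (resp. $p_n$) as the sum, over all tilings of $H_n$ (resp. $P_n$), of the total number of tiles in the tiling. *)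

theory Defs
  imports Complex_Main
begin

text \<open>A lattice point is indexed by (a,b) in Z^2,
  standing for the plane point (a + b/2, b*sqrt 3/2).
  Up a b  is the cell with lattice vertices (a,b), (a+1,b), (a,b+1);
  Dn a b  is the cell with lattice vertices (a+1,b), (a,b+1), (a+1,b+1).\<close>

datatype cell = Up int int | Dn int int

text \<open>Large tiles (side 2 triangles with lattice vertices), as sets of 4 cells.
  bigUp a b has lattice vertices (a,b), (a+2,b), (a,b+2);
  bigDn a b has lattice vertices (a+2,b), (a,b+2), (a+2,b+2).\<close>

definition bigUp :: "int \<Rightarrow> int \<Rightarrow> cell set" where
  "bigUp a b = {Up a b, Up (a+1) b, Up a (b+1), Dn a b}"

definition bigDn :: "int \<Rightarrow> int \<Rightarrow> cell set" where
  "bigDn a b = {Dn (a+1) b, Dn a (b+1), Dn (a+1) (b+1), Up (a+1) (b+1)}"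

definition tiles :: "cell set set" where
  "tiles = {{c} | c. True} \<union> {bigUp a b | a b. True} \<union> {bigDn a b | a b. True}"

text \<open>A tiling of a region R (finite set of cells): a finite set of tiles, each
  contained in R, with pairwise disjoint interiors (= disjoint cell sets),
  whose union is R.\<close>

definition is_tiling :: "cell set \<Rightarrow> cell set set \<Rightarrow> bool" where
  "is_tiling R T \<longleftrightarrow> finite T \<and> T \<subseteq> tiles \<and> (\<forall>t\<in>T. t \<subseteq> R)
      \<and> pairwise disjnt T \<and> \<Union>T = R"

definition tilings :: "cell set \<Rightarrow> cell set set set" where
  "tilings R = {T. is_tiling R T}"

definition num_tilings :: "cell set \<Rightarrow> nat" where
  "num_tilings R = card (tilings R)"

definition total_tiles :: "cell set \<Rightarrow> nat" where
  "total_tiles R = (\<Sum>T\<in>tilings R. card T)"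

text \<open>P_n removes the cell with vertices (n-1,0),(n,0),(n-1/2,s), i.e. Up (n-1) 0.\<close>

definition Hreg :: "nat \<Rightarrow> cell set" where
  "Hreg n = {Up a 0 | a. 0 \<le> a \<and> a \<le> int n - 1}
          \<union> {Dn a 0 | a. 0 \<le> a \<and> a \<le> int n - 2}
          \<union> {Dn a 1 | a. -1 \<le> a \<and> a \<le> int n - 2}
          \<union> {Up a 1 | a. 0 \<le> a \<and> a \<le> int n - 2}"

definition Preg :: "nat \<Rightarrow> cell set" where
  "Preg n = Hreg n - {Up (int n - 1) 0}"

abbreviation H :: "nat \<Rightarrow> nat" where "H n \<equiv> num_tilings (Hreg n)"
abbreviation P :: "nat \<Rightarrow> nat" where "P n \<equiv> num_tilings (Preg n)"
abbreviation hsum :: "nat \<Rightarrow> nat" where "hsum n \<equiv> total_tiles (Hreg n)"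
abbreviation psum :: "nat \<Rightarrow> nat" where "psum n \<equiv> total_tiles (Preg n)"

end

theory Submission
  imports Defs
begin

text \<open>Grouping the tilings of a region \<open>R\<close> by the tile \<open>t\<close> that covers a fixed cell gives
  \<open>num R = (\<Sum>t. num (R - t))\<close> and, since every tiling of \<open>R - t\<close> gains the tile \<open>t\<close>,
  \<open>total R = (\<Sum>t. total (R - t) + num (R - t))\<close>. The rightmost cell of H_n, of P_n and of
  the mirror image Q_n of P_n is covered either by itself or by a single large tile, which
  gives the coupled recurrences Q_(n+1) = P_(n+1) = H_n + P_n and H_(n+1) = P_(n+1) + P_n for
  the numbers of tilings, companion recurrences for the tile totals, and the closed forms by
  induction on n.\<close>

lemma is_tiling_remove_tile:
  assumes "is_tiling R T" "t \<in> T"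
  shows "is_tiling (R - t) (T - {t})"
  using assms unfolding is_tiling_def pairwise_def disjnt_def by blast

lemma is_tiling_insert_tile:
  assumes "t \<in> tiles" "t \<subseteq> R" "is_tiling (R - t) T"
  shows "is_tiling R (insert t T)"
  using assms unfolding is_tiling_def pairwise_def disjnt_def by auto

lemma empty_notin_tiles: "{} \<notin> tiles"
  by (auto simp: tiles_def bigUp_def bigDn_def)

lemma tilings_empty: "tilings {} = {{}}"
  using empty_notin_tiles by (auto simp: tilings_def is_tiling_def)

lemma finite_tilings: "finite R \<Longrightarrow> finite (tilings R)"
  by (rule finite_subset[of _ "Pow (Pow R)"]) (auto simp: tilings_def is_tiling_def)

lemma tilings_by_tile_at:
  assumes "c \<in> R"
  shows "tilings R = (\<Union>t\<in>{t \<in> tiles. c \<in> t \<and> t \<subseteq> R}. insert t ` tilings (R - t))"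
proof (intro equalityI subsetI)
  fix T assume "T \<in> tilings R"
  then have T: "is_tiling R T" by (simp add: tilings_def)
  then obtain t where t: "t \<in> T" "c \<in> t" using assms by (auto simp: is_tiling_def)
  then have "T = insert t (T - {t})" "T - {t} \<in> tilings (R - t)"
    using is_tiling_remove_tile[OF T] by (auto simp: tilings_def)
  moreover have "t \<in> tiles" "t \<subseteq> R" using T t by (auto simp: is_tiling_def)
  ultimately show "T \<in> (\<Union>t\<in>{t \<in> tiles. c \<in> t \<and> t \<subseteq> R}. insert t ` tilings (R - t))"
    using t by blast
qed (auto simp: tilings_def intro: is_tiling_insert_tile)

lemma tile_notin_tiling_of_rest: "c \<in> t \<Longrightarrow> T \<in> tilings (R - t) \<Longrightarrow> t \<notin> T"
  by (auto simp: tilings_def is_tiling_def)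

lemma
  fixes c :: cell and R :: "cell set"
  defines "C \<equiv> {t \<in> tiles. c \<in> t \<and> t \<subseteq> R}"
  assumes "finite R" "c \<in> R"
  shows num_tilings_by_tile_at: "num_tilings R = (\<Sum>t\<in>C. num_tilings (R - t))"
    and total_tiles_by_tile_at: "total_tiles R = (\<Sum>t\<in>C. total_tiles (R - t) + num_tilings (R - t))"
proof -
  have finite_C: "finite C" using \<open>finite R\<close> by (auto simp: C_def intro: finite_subset[of _ "Pow R"])
  have finite_parts: "finite (insert t ` tilings (R - t))" for t
    using \<open>finite R\<close> by (simp add: finite_tilings)
  have disjoint: "insert t ` tilings (R - t) \<inter> insert t' ` tilings (R - t') = {}"
    if "t \<in> C" "t' \<in> C" "t \<noteq> t'" for t t'
    using that by (fastforce simp: C_def tilings_def is_tiling_def)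
  have sum_over_C: "(\<Sum>T\<in>tilings R. f T) = (\<Sum>t\<in>C. \<Sum>T\<in>tilings (R - t). f (insert t T))"
    for f :: "cell set set \<Rightarrow> nat"
  proof -
    have "inj_on (insert t) (tilings (R - t))" if "t \<in> C" for t
      using that tile_notin_tiling_of_rest[of c t _ R]
      by (intro inj_onI) (metis C_def insert_ident mem_Collect_eq)
    then show ?thesis
      unfolding tilings_by_tile_at[OF \<open>c \<in> R\<close>, folded C_def]
      by (subst sum.UNION_disjoint) (auto simp: finite_C finite_parts disjoint sum.reindex)
  qed
  show "num_tilings R = (\<Sum>t\<in>C. num_tilings (R - t))"
    using sum_over_C[of "\<lambda>_. 1"] by (simp add: num_tilings_def)
  have "(\<Sum>T\<in>tilings (R - t). card (insert t T)) = total_tiles (R - t) + num_tilings (R - t)"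
    if "t \<in> C" for t
  proof -
    have "card (insert t T) = card T + 1" if "T \<in> tilings (R - t)" for T
      using that \<open>t \<in> C\<close> tile_notin_tiling_of_rest[of c t T R]
      by (simp add: C_def tilings_def is_tiling_def)
    then show ?thesis by (simp add: total_tiles_def num_tilings_def sum_Suc)
  qed
  then show "total_tiles R = (\<Sum>t\<in>C. total_tiles (R - t) + num_tilings (R - t))"
    using sum_over_C[of card] by (simp add: total_tiles_def)
qed

lemma tiles_containing:
  "{t \<in> tiles. c \<in> t \<and> t \<subseteq> R} = (if c \<in> R then {{c}} else {})
     \<union> {bigUp a b |a b. c \<in> bigUp a b \<and> bigUp a b \<subseteq> R} \<union> {bigDn a b |a b. c \<in> bigDn a b \<and> bigDn a b \<subseteq> R}"
  by (auto simp: tiles_def)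

lemma tiles_containing_eq_bigUp:
  assumes "c \<in> R" "\<And>a b. c \<in> bigUp a b \<and> bigUp a b \<subseteq> R \<longleftrightarrow> a = a0 \<and> b = b0"
    and "\<And>a b. \<not> (c \<in> bigDn a b \<and> bigDn a b \<subseteq> R)"
  shows "{t \<in> tiles. c \<in> t \<and> t \<subseteq> R} = {{c}, bigUp a0 b0}"
  using assms by (auto simp: tiles_containing)

lemma tiles_containing_eq_bigDn:
  assumes "c \<in> R" "\<And>a b. \<not> (c \<in> bigUp a b \<and> bigUp a b \<subseteq> R)"
    and "\<And>a b. c \<in> bigDn a b \<and> bigDn a b \<subseteq> R \<longleftrightarrow> a = a0 \<and> b = b0"
  shows "{t \<in> tiles. c \<in> t \<and> t \<subseteq> R} = {{c}, bigDn a0 b0}"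
  using assms by (auto simp: tiles_containing)

lemma bigUp_ne_singleton: "bigUp a b \<noteq> {c}"
  and bigDn_ne_singleton: "bigDn a b \<noteq> {c}"
  by (auto simp: bigUp_def bigDn_def)

lemma
  assumes "finite R" "c \<in> R"
    and "\<And>a b. c \<in> bigUp a b \<Longrightarrow> \<not> bigUp a b \<subseteq> R" "\<And>a b. c \<in> bigDn a b \<Longrightarrow> \<not> bigDn a b \<subseteq> R"
  shows num_tilings_forced_cell: "num_tilings R = num_tilings (R - {c})"
    and total_tiles_forced_cell: "total_tiles R = total_tiles (R - {c}) + num_tilings (R - {c})"
proof -
  have "{t \<in> tiles. c \<in> t \<and> t \<subseteq> R} = {{c}}"
    unfolding tiles_containing using assms(2-4) by auto
  then show "num_tilings R = num_tilings (R - {c})"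
    and "total_tiles R = total_tiles (R - {c}) + num_tilings (R - {c})"
    using num_tilings_by_tile_at[OF assms(1,2)] total_tiles_by_tile_at[OF assms(1,2)] by simp_all
qed

lemma
  assumes "finite R" "c \<in> R" "{t \<in> tiles. c \<in> t \<and> t \<subseteq> R} = {{c}, t}" "t \<noteq> {c}"
  shows num_tilings_two_choices: "num_tilings R = num_tilings (R - {c}) + num_tilings (R - t)"
    and total_tiles_two_choices: "total_tiles R =
      total_tiles (R - {c}) + num_tilings (R - {c}) + total_tiles (R - t) + num_tilings (R - t)"
  using num_tilings_by_tile_at[OF assms(1,2)] total_tiles_by_tile_at[OF assms(1,2)] assms(3,4)
  by simp_all

lemma singleton_tile_counts: "num_tilings {c} = 1" "total_tiles {c} = 1"
proof -
  have "\<not> bigUp a b \<subseteq> {c}" "\<not> bigDn a b \<subseteq> {c}" for a b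
    by (auto simp: bigUp_def bigDn_def)
  then show "num_tilings {c} = 1" "total_tiles {c} = 1"
    using num_tilings_forced_cell[of "{c}" c] total_tiles_forced_cell[of "{c}" c]
    by (simp_all add: tilings_empty num_tilings_def total_tiles_def)
qed

lemma cell_set_eqI:
  assumes "\<And>a b. Up a b \<in> A \<longleftrightarrow> Up a b \<in> B" "\<And>a b. Dn a b \<in> A \<longleftrightarrow> Dn a b \<in> B"
  shows "A = B"
proof (rule set_eqI)
  fix c show "c \<in> A \<longleftrightarrow> c \<in> B" using assms by (cases c) auto
qed

text \<open>\<open>strip i j\<close> consists of the first \<open>i\<close> cells of the bottom row and the first \<open>j\<close> cells of
  the top row, where \<open>cell_pos\<close> numbers the cells of each row from the left starting with
  \<open>Up 0 0\<close> and \<open>Dn (-1) 1\<close>.\<close>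

fun cell_row :: "cell \<Rightarrow> int" where
  "cell_row (Up a b) = b" | "cell_row (Dn a b) = b"

fun cell_pos :: "cell \<Rightarrow> int" where
  "cell_pos (Up a b) = 2 * a + b" | "cell_pos (Dn a b) = 2 * a + b + 1"

definition strip :: "int \<Rightarrow> int \<Rightarrow> cell set" where
  "strip i j = {c. 0 \<le> cell_pos c \<and> (cell_row c = 0 \<and> cell_pos c < i \<or> cell_row c = 1 \<and> cell_pos c < j)}"

lemma Up_in_strip [simp]:
  "Up a b \<in> strip i j \<longleftrightarrow> 0 \<le> 2 * a + b \<and> (b = 0 \<and> 2 * a < i \<or> b = 1 \<and> 2 * a + 1 < j)"
  by (auto simp: strip_def)

lemma Dn_in_strip [simp]:
  "Dn a b \<in> strip i j \<longleftrightarrow> 0 \<le> 2 * a + b + 1 \<and> (b = 0 \<and> 2 * a + 1 < i \<or> b = 1 \<and> 2 * a + 2 < j)"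
  by (auto simp: strip_def)

lemma bigUp_subset_strip:
  "bigUp a b \<subseteq> strip i j \<longleftrightarrow> b = 0 \<and> 0 \<le> a \<and> 2 * a + 2 < i \<and> 2 * a + 1 < j"
  by (auto simp: bigUp_def)

lemma bigDn_subset_strip:
  "bigDn a b \<subseteq> strip i j \<longleftrightarrow> b = 0 \<and> -1 \<le> a \<and> 2 * a + 3 < i \<and> 2 * a + 4 < j"
  by (auto simp: bigDn_def)

lemma finite_strip: "finite (strip i j)"
proof (rule finite_subset)
  show "strip i j \<subseteq> (\<Union>a\<in>{-1..max i j}. \<Union>b\<in>{0,1}. {Up a b, Dn a b})"
  proof
    fix c assume "c \<in> strip i j"
    then show "c \<in> (\<Union>a\<in>{-1..max i j}. \<Union>b\<in>{0,1}. {Up a b, Dn a b})" by (cases c) auto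
  qed
qed simp

text \<open>\<open>hstrip n\<close> is H_n and \<open>pstrip n\<close> is P_n; \<open>qstrip n\<close> is the image of P_n under the
  half-turn exchanging the two rows.\<close>

definition hstrip :: "int \<Rightarrow> cell set" where "hstrip m = strip (2 * m - 1) (2 * m - 1)"
definition pstrip :: "int \<Rightarrow> cell set" where "pstrip m = strip (2 * m - 2) (2 * m - 1)"
definition qstrip :: "int \<Rightarrow> cell set" where "qstrip m = strip (2 * m - 1) (2 * m - 2)"

lemma finite_hstrip: "finite (hstrip m)"
  and finite_pstrip: "finite (pstrip m)"
  and finite_qstrip: "finite (qstrip m)"
  by (simp_all add: hstrip_def pstrip_def qstrip_def finite_strip)

lemma Hreg_eq_hstrip: "Hreg n = hstrip (int n)"
  by (rule cell_set_eqI) (auto simp: Hreg_def hstrip_def)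

lemma Preg_eq_pstrip: "Preg n = pstrip (int n)"
  by (rule cell_set_eqI) (auto simp: Preg_def Hreg_def pstrip_def)

lemma
  fixes m :: int assumes "m \<ge> 1"
  shows num_tilings_even_strip: "num_tilings (strip (2 * m) (2 * m)) = num_tilings (hstrip m)"
    and total_tiles_even_strip:
      "total_tiles (strip (2 * m) (2 * m)) = total_tiles (hstrip m) + 2 * num_tilings (hstrip m)"
proof -
  let ?R = "strip (2 * m) (2 * m)" and ?R' = "strip (2 * m - 1) (2 * m)"
  have "Dn (m - 1) 0 \<in> bigUp a b \<Longrightarrow> \<not> bigUp a b \<subseteq> ?R" for a b
    by (auto simp: bigUp_subset_strip bigUp_def)
  moreover have "Dn (m - 1) 0 \<in> bigDn a b \<Longrightarrow> \<not> bigDn a b \<subseteq> ?R" for a b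
    by (auto simp: bigDn_subset_strip bigDn_def)
  moreover have "Up (m - 1) 1 \<in> bigUp a b \<Longrightarrow> \<not> bigUp a b \<subseteq> ?R'" for a b
    by (auto simp: bigUp_subset_strip bigUp_def)
  moreover have "Up (m - 1) 1 \<in> bigDn a b \<Longrightarrow> \<not> bigDn a b \<subseteq> ?R'" for a b
    by (auto simp: bigDn_subset_strip bigDn_def)
  moreover have "?R - {Dn (m - 1) 0} = ?R'" and "?R' - {Up (m - 1) 1} = hstrip m"
    by (intro cell_set_eqI; auto simp: hstrip_def; presburger)+
  moreover note forced = num_tilings_forced_cell total_tiles_forced_cell
  ultimately show "num_tilings ?R = num_tilings (hstrip m)"
    and "total_tiles ?R = total_tiles (hstrip m) + 2 * num_tilings (hstrip m)"
    using assms forced[of ?R "Dn (m - 1) 0"] forced[of ?R' "Up (m - 1) 1"]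
    by (simp_all add: finite_strip)
qed

lemma
  fixes m :: int assumes "m \<ge> 1"
  shows num_tilings_qstrip_succ:
      "num_tilings (qstrip (m + 1)) = num_tilings (hstrip m) + num_tilings (pstrip m)"
    and total_tiles_qstrip_succ: "total_tiles (qstrip (m + 1)) =
      total_tiles (hstrip m) + 3 * num_tilings (hstrip m) + total_tiles (pstrip m) + num_tilings (pstrip m)"
proof -
  have cell: "Up m 0 \<in> qstrip (m + 1)"
    using assms by (simp add: qstrip_def)
  have "Up m 0 \<in> bigUp a b \<and> bigUp a b \<subseteq> qstrip (m + 1) \<longleftrightarrow> a = m - 1 \<and> b = 0" for a b
    using assms by (auto simp: qstrip_def bigUp_subset_strip bigUp_def)
  moreover have "\<not> (Up m 0 \<in> bigDn a b \<and> bigDn a b \<subseteq> qstrip (m + 1))" for a b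
    by (auto simp: qstrip_def bigDn_subset_strip bigDn_def)
  ultimately have C: "{t \<in> tiles. Up m 0 \<in> t \<and> t \<subseteq> qstrip (m + 1)} = {{Up m 0}, bigUp (m - 1) 0}"
    by (rule tiles_containing_eq_bigUp[OF cell])
  have "qstrip (m + 1) - {Up m 0} = strip (2 * m) (2 * m)"
    and "qstrip (m + 1) - bigUp (m - 1) 0 = pstrip m"
    by (intro cell_set_eqI; auto simp: qstrip_def pstrip_def bigUp_def; presburger)+
  then show "num_tilings (qstrip (m + 1)) = num_tilings (hstrip m) + num_tilings (pstrip m)"
    and "total_tiles (qstrip (m + 1)) =
      total_tiles (hstrip m) + 3 * num_tilings (hstrip m) + total_tiles (pstrip m) + num_tilings (pstrip m)"
    using num_tilings_two_choices[OF finite_qstrip cell C bigUp_ne_singleton]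
      total_tiles_two_choices[OF finite_qstrip cell C bigUp_ne_singleton]
      num_tilings_even_strip[OF assms] total_tiles_even_strip[OF assms]
    by simp_all
qed

lemma
  fixes m :: int assumes "m \<ge> 1"
  shows num_tilings_pstrip_succ:
      "num_tilings (pstrip (m + 1)) = num_tilings (hstrip m) + num_tilings (qstrip m)"
    and total_tiles_pstrip_succ: "total_tiles (pstrip (m + 1)) =
      total_tiles (hstrip m) + 3 * num_tilings (hstrip m) + total_tiles (qstrip m) + num_tilings (qstrip m)"
proof -
  have cell: "Dn (m - 1) 1 \<in> pstrip (m + 1)"
    using assms by (simp add: pstrip_def)
  have "\<not> (Dn (m - 1) 1 \<in> bigUp a b \<and> bigUp a b \<subseteq> pstrip (m + 1))" for a b
    by (auto simp: pstrip_def bigUp_subset_strip bigUp_def)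
  moreover have "Dn (m - 1) 1 \<in> bigDn a b \<and> bigDn a b \<subseteq> pstrip (m + 1) \<longleftrightarrow> a = m - 2 \<and> b = 0" for a b
    using assms by (auto simp: pstrip_def bigDn_subset_strip bigDn_def)
  ultimately have C: "{t \<in> tiles. Dn (m - 1) 1 \<in> t \<and> t \<subseteq> pstrip (m + 1)} = {{Dn (m - 1) 1}, bigDn (m - 2) 0}"
    by (rule tiles_containing_eq_bigDn[OF cell])
  have "pstrip (m + 1) - {Dn (m - 1) 1} = strip (2 * m) (2 * m)"
    and "pstrip (m + 1) - bigDn (m - 2) 0 = qstrip m"
    by (intro cell_set_eqI; auto simp: qstrip_def pstrip_def bigDn_def; presburger)+
  then show "num_tilings (pstrip (m + 1)) = num_tilings (hstrip m) + num_tilings (qstrip m)"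
    and "total_tiles (pstrip (m + 1)) =
      total_tiles (hstrip m) + 3 * num_tilings (hstrip m) + total_tiles (qstrip m) + num_tilings (qstrip m)"
    using num_tilings_two_choices[OF finite_pstrip cell C bigDn_ne_singleton]
      total_tiles_two_choices[OF finite_pstrip cell C bigDn_ne_singleton]
      num_tilings_even_strip[OF assms] total_tiles_even_strip[OF assms]
    by simp_all
qed

lemma
  fixes m :: int assumes "m \<ge> 1"
  shows num_tilings_hstrip_succ:
      "num_tilings (hstrip (m + 1)) = num_tilings (qstrip (m + 1)) + num_tilings (qstrip m)"
    and total_tiles_hstrip_succ: "total_tiles (hstrip (m + 1)) =
      total_tiles (qstrip (m + 1)) + num_tilings (qstrip (m + 1)) + total_tiles (qstrip m) + 2 * num_tilings (qstrip m)"
proof -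
  have cell: "Dn (m - 1) 1 \<in> hstrip (m + 1)"
    using assms by (simp add: hstrip_def)
  have "\<not> (Dn (m - 1) 1 \<in> bigUp a b \<and> bigUp a b \<subseteq> hstrip (m + 1))" for a b
    by (auto simp: hstrip_def bigUp_subset_strip bigUp_def)
  moreover have "Dn (m - 1) 1 \<in> bigDn a b \<and> bigDn a b \<subseteq> hstrip (m + 1) \<longleftrightarrow> a = m - 2 \<and> b = 0" for a b
    using assms by (auto simp: hstrip_def bigDn_subset_strip bigDn_def)
  ultimately have C: "{t \<in> tiles. Dn (m - 1) 1 \<in> t \<and> t \<subseteq> hstrip (m + 1)} = {{Dn (m - 1) 1}, bigDn (m - 2) 0}"
    by (rule tiles_containing_eq_bigDn[OF cell])
  have "hstrip (m + 1) - {Dn (m - 1) 1} = qstrip (m + 1)"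
    by (intro cell_set_eqI; auto simp: hstrip_def qstrip_def; presburger)
  moreover have "hstrip (m + 1) - bigDn (m - 2) 0 = insert (Up m 0) (qstrip m)"
    using assms by (intro cell_set_eqI; auto simp: hstrip_def qstrip_def bigDn_def; presburger)
  moreover have "Up m 0 \<notin> qstrip m"
    by (simp add: qstrip_def)
  moreover have "Up m 0 \<in> bigUp a b \<Longrightarrow> \<not> bigUp a b \<subseteq> insert (Up m 0) (qstrip m)"
    and "Up m 0 \<in> bigDn a b \<Longrightarrow> \<not> bigDn a b \<subseteq> insert (Up m 0) (qstrip m)" for a b
    by (auto simp: qstrip_def bigUp_def bigDn_def)
  ultimately show "num_tilings (hstrip (m + 1)) = num_tilings (qstrip (m + 1)) + num_tilings (qstrip m)"
    and "total_tiles (hstrip (m + 1)) = total_tiles (qstrip (m + 1)) + num_tilings (qstrip (m + 1))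
      + total_tiles (qstrip m) + 2 * num_tilings (qstrip m)"
    using num_tilings_two_choices[OF finite_hstrip cell C bigDn_ne_singleton]
      total_tiles_two_choices[OF finite_hstrip cell C bigDn_ne_singleton]
      num_tilings_forced_cell[of "insert (Up m 0) (qstrip m)" "Up m 0"]
      total_tiles_forced_cell[of "insert (Up m 0) (qstrip m)" "Up m 0"]
    by (simp_all add: finite_qstrip)
qed

lemma hstrip_one_counts: "num_tilings (hstrip 1) = 1" "total_tiles (hstrip 1) = 2"
proof -
  have "Dn (-1) 1 \<in> hstrip 1" "hstrip 1 - {Dn (-1) 1} = {Up 0 0}"
    by (simp add: hstrip_def, intro cell_set_eqI) (auto simp: hstrip_def)
  moreover have "Dn (-1) 1 \<in> bigUp a b \<Longrightarrow> \<not> bigUp a b \<subseteq> hstrip 1"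
    and "Dn (-1) 1 \<in> bigDn a b \<Longrightarrow> \<not> bigDn a b \<subseteq> hstrip 1" for a b
    by (auto simp: hstrip_def bigUp_subset_strip bigDn_subset_strip)
  ultimately show "num_tilings (hstrip 1) = 1" "total_tiles (hstrip 1) = 2"
    using num_tilings_forced_cell[of "hstrip 1" "Dn (-1) 1"]
      total_tiles_forced_cell[of "hstrip 1" "Dn (-1) 1"]
    by (simp_all add: finite_hstrip singleton_tile_counts)
qed

lemma pstrip_one: "pstrip 1 = {Dn (-1) 1}" and qstrip_one: "qstrip 1 = {Up 0 0}"
  by (intro cell_set_eqI; auto simp: pstrip_def qstrip_def)+

lemma strip_tiling_statistics:
  fixes m :: int assumes "m \<ge> 1"
  shows "num_tilings (qstrip m) = num_tilings (pstrip m) \<and> total_tiles (qstrip m) = total_tiles (pstrip m)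
    \<and> 2 * real (total_tiles (pstrip m)) = (5 * m - 3) * real (num_tilings (pstrip m))
    \<and> 2 * real (total_tiles (hstrip m)) =
        (5 * m - 4) * real (num_tilings (hstrip m)) + 3 * real (num_tilings (pstrip m))"
  using assms
proof (induction m rule: int_ge_induct)
  case base
  then show ?case
    by (simp add: pstrip_one qstrip_one singleton_tile_counts hstrip_one_counts)
next
  case (step m)
  let ?NH = "real (num_tilings (hstrip m))" and ?SH = "real (total_tiles (hstrip m))"
    and ?NP = "real (num_tilings (pstrip m))" and ?SP = "real (total_tiles (pstrip m))"
    and ?NP' = "real (num_tilings (pstrip (m + 1)))" and ?SP' = "real (total_tiles (pstrip (m + 1)))"
  have q_eq_p: "num_tilings (qstrip (m + 1)) = num_tilings (pstrip (m + 1))"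
      "total_tiles (qstrip (m + 1)) = total_tiles (pstrip (m + 1))"
    using step num_tilings_qstrip_succ num_tilings_pstrip_succ total_tiles_qstrip_succ total_tiles_pstrip_succ
    by simp_all
  have NP': "?NP' = ?NH + ?NP" and SP': "?SP' = ?SH + 3 * ?NH + ?SP + ?NP"
    using step num_tilings_pstrip_succ total_tiles_pstrip_succ by simp_all
  have "real (num_tilings (hstrip (m + 1))) = ?NP' + ?NP"
    and "real (total_tiles (hstrip (m + 1))) = ?SP' + ?NP' + ?SP + 2 * ?NP"
    using step q_eq_p num_tilings_hstrip_succ total_tiles_hstrip_succ by simp_all
  with step NP' SP' q_eq_p show ?case
    by (simp add: algebra_simps)
qed

theorem theorem6:
  fixes n :: nat
  assumes "n \<ge> 1"
  shows "real (hsum n) = 5/2 * real n * real (H n) + 3/2 * real (P n) - 2 * real (H n)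
     \<and> real (psum n) = 5/2 * real n * real (P n) - 3/2 * real (P n)
     \<and> 5/2 * real n * real (P n) - 3/2 * real (P n) = (5 * real n - 3) / 2 * real (P n)"
  using strip_tiling_statistics[of "int n"] assms
  by (simp add: Hreg_eq_hstrip Preg_eq_pstrip field_simps)

end
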